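(* Let $x,y\ge 0$, not both zero, and $z>0$ (the approximation is intended for the regime $x,y\ll z$). Let $a=(x+y)/2$ and $g=\sqrt{xy}$. Then $$R_D(x,y,z)=\frac{3}{2z^{3/2}}\left(\ln\frac{8z}{a+g}-2+\frac{\theta}{z}\ln\frac{2z}{a+g}\right),$$ where $\frac{g}{1-g/z}<\theta<\frac{3a}{2(1-a/z)}$.
   Context: For $x,y\ge0$ not both zero and $z>0$: $R_D(x,y,z)=\frac32\int_0^\infty[(t+x)(t+y)]^{-1/2}(t+z)^{-3/2}\,dt$. *)

theory Defs
  imports "HOL-Analysis.Analysis"
begin

definition carlson_RD :: "real \<Rightarrow> real \<Rightarrow> real \<Rightarrow> real" where
  "carlson_RD x y z =
     3 / 2 * integral {0..} (\<lambda>t. 1 / sqrt ((t + x) * (t + y)) * (t + z) powr (-3/2))"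

end

theory Submission
  imports Defs "HOL-Real_Asymp.Real_Asymp"
begin

text \<open>
  Substitute u = ((sqrt (t + x) + sqrt (t + y)) / 2)^2. Then du/dt = u / sqrt ((t + x) (t + y)) and
  t + c \<le> u \<le> t + a with c = (a + g) / 2, so replacing t + z by u + (z - c) resp. u + (z - a)
  bounds the integrand of R_D from below resp. above by integrands that become
  du / (u (u + B)^(3/2)). These integrate in closed form: from u = s to infinity the integral is
  2 (artanh k - k) / B^(3/2) with k = sqrt (B / (s + B)). For B = z - c and s = c this is
  evaluated at once; for B = z - a the lower limit c is first moved to a at the cost of a
  multiple of ln (a / c). The stated range of \<theta> then follows from two estimates of
  artanh k - k on (0, 1), both sharp at k = 0 and as k \<rightarrow> 1: in each the difference of the two
  sides vanishes at both ends and its derivative changes sign only once.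
\<close>

lemma powr_three_halves: "0 < v \<Longrightarrow> v powr (3/2) = v * sqrt (v::real)"
  by (simp add: powr_add[of v 1 "1/2", simplified] powr_half_sqrt)

lemma has_integral_Ioi_of_nonneg_deriv:
  fixes F f :: "real \<Rightarrow> real"
  assumes deriv: "\<And>t. a < t \<Longrightarrow> (F has_real_derivative f t) (at t)"
    and cont: "\<And>t. a < t \<Longrightarrow> isCont f t"
    and nonneg: "\<And>t. a < t \<Longrightarrow> 0 \<le> f t"
    and lim_a: "(F \<longlongrightarrow> A) (at_right a)" and lim_top: "(F \<longlongrightarrow> B) at_top"
  shows "(f has_integral (B - A)) {a<..}"
proof -
  have A: "((F \<circ> real_of_ereal) \<longlongrightarrow> A) (at_right (ereal a))"
    using lim_a by (simp add: ereal_tendsto_simps1)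
  have B: "((F \<circ> real_of_ereal) \<longlongrightarrow> B) (at_left \<infinity>)"
    using lim_top by (simp add: ereal_tendsto_simps1)
  have "set_integrable lborel (einterval a \<infinity>) f" "(LBINT t=ereal a..\<infinity>. f t) = B - A"
    by (rule interval_integral_FTC_nonneg[OF _ _ _ _ A B]; use deriv cont nonneg in auto)+
  then have "set_integrable lborel {a<..} f" "(LINT t : {a<..} | lborel. f t) = B - A"
    by (simp_all add: interval_lebesgue_integral_def)
  then show ?thesis
    using set_borel_integral_eq_integral by (metis integrable_integral)
qed

lemma neg_after_nonpos_of_deriv_sign_change:
  fixes w w' :: "real \<Rightarrow> real"
  assumes cont: "\<And>t. a \<le> t \<Longrightarrow> t < b \<Longrightarrow> isCont w t" and "w a = 0"
    and der: "\<And>t. a < t \<Longrightarrow> t < b \<Longrightarrow> (w has_real_derivative w' t) (at t)"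
    and pos: "\<And>t. a < t \<Longrightarrow> t < m \<Longrightarrow> 0 < w' t"
    and neg: "\<And>t. m < t \<Longrightarrow> t < b \<Longrightarrow> w' t < 0"
    and pq: "a < p" "p < q" "q < b" and "w p \<le> 0"
  shows "w q < 0"
proof (cases "p \<le> m")
  case True
  have "w a < w p"
  proof (rule DERIV_pos_imp_increasing_open[OF pq(1)])
    fix t assume "a < t" "t < p"
    with der[of t] pos[of t] True pq show "\<exists>y. DERIV w t :> y \<and> 0 < y" by auto
  next
    show "continuous_on {a..p} w"
      by (intro continuous_at_imp_continuous_on ballI cont) (use pq in auto)
  qed
  with assms show ?thesis by simp
next
  case False
  have "w q < w p"
  proof (rule DERIV_neg_imp_decreasing_open[OF pq(2)])
    fix t assume "p < t" "t < q"
    with der[of t] neg[of t] False pq show "\<exists>y. DERIV w t :> y \<and> y < 0" by auto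
  next
    show "continuous_on {p..q} w"
      by (intro continuous_at_imp_continuous_on ballI cont) (use pq in auto)
  qed
  with assms show ?thesis by simp
qed

lemma pos_between_zeros_of_deriv_sign_change:
  fixes f d :: "real \<Rightarrow> real"
  assumes cont: "\<And>t. a \<le> t \<Longrightarrow> t < b \<Longrightarrow> isCont f t"
    and "f a = 0" and lim: "(f \<longlongrightarrow> 0) (at_left b)"
    and der: "\<And>t. a < t \<Longrightarrow> t < b \<Longrightarrow> (f has_real_derivative d t) (at t)"
    and sign: "\<And>s t. a < s \<Longrightarrow> s < t \<Longrightarrow> t < b \<Longrightarrow> d s \<le> 0 \<Longrightarrow> d t < 0"
    and k: "a < k" "k < b"
  shows "0 < f k"
proof (cases "0 \<le> d k")
  case True
  have "f a < f k"
  proof (rule DERIV_pos_imp_increasing_open[OF k(1)])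
    fix t assume t: "a < t" "t < k"
    with sign[of t k] True k have "0 < d t" by force
    with der t k show "\<exists>y. DERIV f t :> y \<and> 0 < y" by force
  next
    show "continuous_on {a..k} f"
      by (intro continuous_at_imp_continuous_on ballI cont) (use k in auto)
  qed
  with assms show ?thesis by simp
next
  case False
  have decreasing: "f t < f s" if "k \<le> s" "s < t" "t < b" for s t
  proof (rule DERIV_neg_imp_decreasing_open[OF that(2)])
    fix u assume "s < u" "u < t"
    with der sign[of k u] False k that show "\<exists>y. DERIV f u :> y \<and> y < 0" by force
  next
    show "continuous_on {s..t} f"
      by (intro continuous_at_imp_continuous_on ballI cont) (use k that in auto)
  qed
  define k' where "k' = (k + b) / 2"
  have k': "k < k'" "k' < b" using k by (auto simp: k'_def)
  have "0 \<le> f k'"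
  proof (rule tendsto_upperbound[OF lim])
    show "\<forall>\<^sub>F t in at_left b. f t \<le> f k'"
      by (rule eventually_at_leftI[OF _ k'(2)])
        (use decreasing[of k'] k' in \<open>auto intro: less_imp_le\<close>)
  qed simp
  with decreasing[of k k'] k' show ?thesis by simp
qed

lemma ln_one_minus_add_linear_sign_change:
  fixes \<beta> :: real
  assumes "1 < \<beta>" "0 < s" "s < t" "t < 1" "ln (1 - s) + \<beta> * s \<le> 0"
  shows "ln (1 - t) + \<beta> * t < 0"
proof (rule neg_after_nonpos_of_deriv_sign_change[where w = "\<lambda>m. ln (1 - m) + \<beta> * m"
      and w' = "\<lambda>m. \<beta> - 1 / (1 - m)" and a = 0 and b = 1 and m = "1 - 1 / \<beta>"])
  show "isCont (\<lambda>m. ln (1 - m) + \<beta> * m) m" if "0 \<le> m" "m < 1" for m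
    using that by (intro continuous_intros) auto
  show "((\<lambda>m. ln (1 - m) + \<beta> * m) has_real_derivative \<beta> - 1 / (1 - m)) (at m)"
    if "0 < m" "m < 1" for m
    using that by (auto intro!: derivative_eq_intros simp: field_simps)
  show "0 < \<beta> - 1 / (1 - m)" if "0 < m" "m < 1 - 1 / \<beta>" for m
  proof -
    have "0 < 1 / \<beta>" using \<open>1 < \<beta>\<close> by simp
    with that have "0 < 1 - m" by linarith
    with that \<open>1 < \<beta>\<close> show ?thesis by (simp add: field_simps)
  qed
  show "\<beta> - 1 / (1 - m) < 0" if "1 - 1 / \<beta> < m" "m < 1" for m
    using that \<open>1 < \<beta>\<close> by (simp add: field_simps)
qed (use assms in auto)

lemma linear_sub_mult_ln_one_minus_sign_change:
  fixes \<gamma> :: real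
  assumes "- 1 < \<gamma>" "0 < s" "s < t" "t < 1" "\<gamma> * s - (1 - s) * ln (1 - s) \<le> 0"
  shows "\<gamma> * t - (1 - t) * ln (1 - t) < 0"
proof (rule neg_after_nonpos_of_deriv_sign_change[where w = "\<lambda>m. \<gamma> * m - (1 - m) * ln (1 - m)"
      and w' = "\<lambda>m. \<gamma> + 1 + ln (1 - m)" and a = 0 and b = 1 and m = "1 - exp (- (\<gamma> + 1))"])
  show "isCont (\<lambda>m. \<gamma> * m - (1 - m) * ln (1 - m)) m" if "0 \<le> m" "m < 1" for m
    using that by (intro continuous_intros) auto
  show "((\<lambda>m. \<gamma> * m - (1 - m) * ln (1 - m)) has_real_derivative \<gamma> + 1 + ln (1 - m)) (at m)"
    if "0 < m" "m < 1" for m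
    using that by (auto intro!: derivative_eq_intros simp: divide_simps)
  show "0 < \<gamma> + 1 + ln (1 - m)" if "0 < m" "m < 1 - exp (- (\<gamma> + 1))" for m
  proof -
    have "0 < 1 - m" using that exp_gt_zero[of "- (\<gamma> + 1)"] by linarith
    with that have "exp (- (\<gamma> + 1)) < exp (ln (1 - m))" by simp
    then show ?thesis by simp
  qed
  show "\<gamma> + 1 + ln (1 - m) < 0" if "1 - exp (- (\<gamma> + 1)) < m" "m < 1" for m
  proof -
    have "exp (ln (1 - m)) < exp (- (\<gamma> + 1))" using that by simp
    then show ?thesis by simp
  qed
qed (use assms in auto)

lemma artanh_lower_bound:
  fixes k :: real
  assumes "0 < k" "k < 1"
  shows "(2 * ln 2 - 2) * k^3 - k * ln (1 - k^2) < 2 * (artanh k - k)"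
proof -
  define \<beta> :: real where "\<beta> = 6 - 6 * ln 2"
  have "1 < \<beta>" using ln2_le_25_over_36 by (simp add: \<beta>_def)
  define f where "f u = 2 * (artanh u - u) + u * ln (1 - u^2) - (2 * ln 2 - 2) * u^3" for u :: real
  have "0 < f k"
  proof (rule pos_between_zeros_of_deriv_sign_change
      [where a = 0 and b = 1 and f = f and d = "\<lambda>u. ln (1 - u^2) + \<beta> * u^2"])
    show "isCont f t" if "0 \<le> t" "t < 1" for t
      unfolding f_def using that by (intro continuous_intros) (auto simp: power2_eq_1_iff)
    show "(f \<longlongrightarrow> 0) (at_left 1)"
      unfolding f_def artanh_def by real_asymp
    show "(f has_real_derivative ln (1 - t^2) + \<beta> * t^2) (at t)" if "0 < t" "t < 1" for t
    proof -
      have "t^2 < 1" using that by (simp add: power_less_one_iff)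
      with that show ?thesis
        unfolding f_def \<beta>_def
        by (auto intro!: derivative_eq_intros simp: divide_simps) (simp add: algebra_simps power2_eq_square)
    qed
    show "ln (1 - t^2) + \<beta> * t^2 < 0"
      if "0 < s" "s < t" "t < 1" "ln (1 - s^2) + \<beta> * s^2 \<le> 0" for s t
      using that \<open>1 < \<beta>\<close>
      by (intro ln_one_minus_add_linear_sign_change[of \<beta> "s^2"])
        (auto simp: power_strict_mono power_less_one_iff)
  qed (use assms in \<open>auto simp: f_def\<close>)
  then show ?thesis by (simp add: f_def)
qed

lemma artanh_upper_bound:
  fixes k :: real
  assumes "0 < k" "k < 1"
  shows "2 * (artanh k - k) < (2 * ln 2 - 2) * k^3 - (3 * k - k^3) / 2 * ln (1 - k^2)"
proof -
  define \<gamma> :: real where "\<gamma> = 4 * ln 2 - 10 / 3"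
  have "- 1 < \<gamma>" using ln2_ge_two_thirds by (simp add: \<gamma>_def)
  define \<omega> where "\<omega> m = \<gamma> * m - (1 - m) * ln (1 - m)" for m :: real
  define f where "f u = (2 * ln 2 - 2) * u^3 - (3 * u - u^3) / 2 * ln (1 - u^2) - 2 * (artanh u - u)"
    for u :: real
  have "0 < f k"
  proof (rule pos_between_zeros_of_deriv_sign_change
      [where a = 0 and b = 1 and f = f and d = "\<lambda>u. 3 / 2 * \<omega> (u^2)"])
    show "isCont f t" if "0 \<le> t" "t < 1" for t
      unfolding f_def using that by (intro continuous_intros) (auto simp: power2_eq_1_iff)
    show "(f \<longlongrightarrow> 0) (at_left 1)"
      unfolding f_def artanh_def by real_asymp
    show "(f has_real_derivative 3 / 2 * \<omega> (t^2)) (at t)" if "0 < t" "t < 1" for t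
    proof -
      have "t^2 < 1" using that by (simp add: power_less_one_iff)
      with that show ?thesis
        unfolding f_def \<omega>_def \<gamma>_def
        by (auto intro!: derivative_eq_intros simp: divide_simps)
          (simp add: algebra_simps power2_eq_square power3_eq_cube)
    qed
    show "3 / 2 * \<omega> (t^2) < 0" if "0 < s" "s < t" "t < 1" "3 / 2 * \<omega> (s^2) \<le> 0" for s t
    proof -
      have "\<omega> (t^2) < 0"
        unfolding \<omega>_def using that \<open>- 1 < \<gamma>\<close>
        by (intro linear_sub_mult_ln_one_minus_sign_change[of \<gamma> "s^2"])
          (auto simp: \<omega>_def power_strict_mono power_less_one_iff)
      then show ?thesis by simp
    qed
  qed (use assms in \<open>auto simp: f_def\<close>)
  then show ?thesis by (simp add: f_def)
qed

text \<open>The integral of 1 / (u (u + B)^(3/2)) over u > s.\<close>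

definition rd_tail :: "real \<Rightarrow> real \<Rightarrow> real" where
  "rd_tail B s = 2 * (artanh (sqrt B / sqrt (s + B)) - sqrt B / sqrt (s + B)) / (B * sqrt B)"

lemma rd_tail_has_real_derivative:
  assumes "0 < B" "0 < s"
  shows "(rd_tail B has_real_derivative - 1 / (s * (s + B) * sqrt (s + B))) (at s)"
proof -
  define w where "w = sqrt (s + B)"
  have w: "0 < w" "w^2 = s + B" "sqrt B < w" using assms by (auto simp: w_def)
  have "\<bar>sqrt B / w\<bar> < 1" using w assms by simp
  then have "(artanh has_real_derivative 1 / (1 - (sqrt B / w)^2)) (at (sqrt B / w))"
    by (rule artanh_real_has_field_derivative)
  moreover have ratio: "((\<lambda>s. sqrt B / sqrt (s + B)) has_real_derivative - sqrt B / (2 * w^3)) (at s)"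
    using assms unfolding w_def
    by (auto intro!: derivative_eq_intros simp: power3_eq_cube field_simps)
  ultimately have artanh': "((\<lambda>s. artanh (sqrt B / sqrt (s + B))) has_real_derivative
      1 / (1 - (sqrt B / w)^2) * (- sqrt B / (2 * w^3))) (at s)"
    unfolding w_def by (rule DERIV_chain2)
  have "(rd_tail B has_real_derivative
      2 * (1 / (1 - (sqrt B / w)^2) * (- sqrt B / (2 * w^3)) - (- sqrt B / (2 * w^3))) / (B * sqrt B))
      (at s)"
    unfolding rd_tail_def[abs_def] by (intro DERIV_cdivide DERIV_cmult DERIV_diff artanh' ratio)
  also have "1 / (1 - (sqrt B / w)^2) = w^2 / s"
    using w assms by (simp add: power_divide field_simps)
  also have "2 * (w^2 / s * (- sqrt B / (2 * w^3)) - (- sqrt B / (2 * w^3))) / (B * sqrt B)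
      = - (w^2 - s) / (s * B * w^3)"
    using w(1) assms by (simp add: field_simps)
  also have "\<dots> = - 1 / (s * w^2 * w)"
    using w(2) assms by (simp add: power3_eq_cube power2_eq_square)
  also have "\<dots> = - 1 / (s * (s + B) * sqrt (s + B))"
    using w by (simp add: w_def)
  finally show ?thesis .
qed

lemma tendsto_rd_tail_at_top:
  assumes "0 < B"
  shows "(rd_tail B \<longlongrightarrow> 0) at_top"
proof -
  have "((\<lambda>s. sqrt B / sqrt (s + B)) \<longlongrightarrow> 0) at_top" using assms by real_asymp
  then have "((\<lambda>s. 2 * (artanh (sqrt B / sqrt (s + B)) - sqrt B / sqrt (s + B)) / (B * sqrt B))
      \<longlongrightarrow> 2 * (artanh 0 - 0) / (B * sqrt B)) at_top"
    using assms by (intro tendsto_intros) auto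
  then show ?thesis by (simp add: rd_tail_def[abs_def])
qed

lemma rd_tail_eq_artanh:
  assumes "0 < r" "r < w"
  shows "rd_tail (r^2) (w^2 - r^2) = 2 * (artanh (r / w) - r / w) / r^3"
  using assms by (simp add: rd_tail_def power3_eq_cube power2_eq_square)

lemma rd_tail_bounds:
  assumes "0 < s" "s < z"
  shows "(2 * ln 2 - 2 + z / (z - s) * ln (z / s)) / (z * sqrt z) < rd_tail (z - s) s"
    and "rd_tail (z - s) s
      < (2 * ln 2 - 2 + (1 + 3 * s / (2 * (z - s))) * ln (z / s)) / (z * sqrt z)"
proof -
  define r w where "r = sqrt (z - s)" and "w = sqrt z"
  have rw: "0 < r" "r < w" "r^2 = z - s" "w^2 = z" using assms by (auto simp: r_def w_def)
  define k where "k = r / w"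
  have k: "0 < k" "k < 1" using rw by (auto simp: k_def)
  have "1 - k^2 = inverse (z / s)" using assms by (simp add: k_def power_divide rw(3,4) field_simps)
  then have ln_k: "ln (1 - k^2) = - ln (z / s)" using assms by (simp add: ln_div)
  have tail: "rd_tail (z - s) s = 2 * (artanh k - k) / r^3"
    using rd_tail_eq_artanh[OF rw(1,2)] rw(3,4) by (simp add: k_def)
  have "((2 * ln 2 - 2) * k^3 + k * ln (z / s)) / r^3 < rd_tail (z - s) s"
    using artanh_lower_bound[OF k] ln_k rw(1) unfolding tail by (simp add: divide_strict_right_mono)
  moreover have "((2 * ln 2 - 2) * k^3 + k * L) / r^3 = (2 * ln 2 - 2 + w^2 / r^2 * L) / (w^2 * w)"
    for L
    using rw(1,2) by (simp add: k_def field_simps power3_eq_cube power2_eq_square)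
  ultimately show "(2 * ln 2 - 2 + z / (z - s) * ln (z / s)) / (z * sqrt z) < rd_tail (z - s) s"
    using rw(3,4) by (simp add: w_def)
  have "rd_tail (z - s) s < ((2 * ln 2 - 2) * k^3 + (3 * k - k^3) / 2 * ln (z / s)) / r^3"
    using artanh_upper_bound[OF k] ln_k rw(1) unfolding tail by (simp add: divide_strict_right_mono)
  moreover have "((2 * ln 2 - 2) * k^3 + (3 * k - k^3) / 2 * L) / r^3
      = (2 * ln 2 - 2 + (1 + 3 * (w^2 - r^2) / (2 * r^2)) * L) / (w^2 * w)" for L
    using rw(1,2) by (simp add: k_def field_simps power3_eq_cube power2_eq_square)
  ultimately show "rd_tail (z - s) s
      < (2 * ln 2 - 2 + (1 + 3 * s / (2 * (z - s))) * ln (z / s)) / (z * sqrt z)"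
    using rw(3,4) by (simp add: w_def)
qed

lemma rd_tail_le_add_ln:
  assumes "0 < B" "0 < c" "c \<le> a"
    and bound: "\<And>s. c \<le> s \<Longrightarrow> s \<le> a \<Longrightarrow> 1 / ((s + B) * sqrt (s + B)) \<le> N"
  shows "rd_tail B c \<le> rd_tail B a + N * (ln a - ln c)"
proof -
  have "rd_tail B c + N * ln c \<le> rd_tail B a + N * ln a"
  proof (rule DERIV_nonneg_imp_nondecreasing[OF \<open>c \<le> a\<close>])
    fix s assume s: "c \<le> s" "s \<le> a"
    then have "0 < s" using assms by simp
    have "1 / (s * (s + B) * sqrt (s + B)) = 1 / ((s + B) * sqrt (s + B)) * (1 / s)" by simp
    also have "\<dots> \<le> N * (1 / s)" using bound[OF s] \<open>0 < s\<close> by (intro mult_right_mono) auto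
    finally have "0 \<le> - 1 / (s * (s + B) * sqrt (s + B)) + N * (1 / s)" by simp
    moreover have "((\<lambda>s. rd_tail B s + N * ln s) has_real_derivative
        - 1 / (s * (s + B) * sqrt (s + B)) + N * (1 / s)) (at s)"
      using assms \<open>0 < s\<close> by (intro DERIV_add DERIV_cmult rd_tail_has_real_derivative DERIV_ln_divide)
    ultimately show "\<exists>y. ((\<lambda>s. rd_tail B s + N * ln s) has_real_derivative y) (at s) \<and> 0 \<le> y"
      by blast
  qed
  then show ?thesis by (simp add: algebra_simps)
qed

text \<open>On [a / 2, a] the integrand of rd_tail (z - a) is at most 1 / (s (z - a) sqrt z), since
  z (z - a)^2 \<le> (z - a / 2)^3; the factor z / (z - a) this costs is absorbed by 1 + 3a / (2 (z - a)).\<close>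

lemma rd_tail_upper_bound_shifted:
  assumes "0 < c" "c \<le> a" "a \<le> 2 * c" "a < z"
  shows "rd_tail (z - a) c
    < (2 * ln 2 - 2 + (1 + 3 * a / (2 * (z - a))) * ln (z / c)) / (z * sqrt z)"
proof -
  define M where "M = 1 + 3 * a / (2 * (z - a))"
  have "0 < z" "0 < z - a" using assms by auto
  have "1 / ((s + (z - a)) * sqrt (s + (z - a))) \<le> 1 / ((z - a) * sqrt z)"
    if "c \<le> s" "s \<le> a" for s
  proof -
    define v where "v = s + (z - a)"
    have v: "z - a / 2 \<le> v" using that assms by (simp add: v_def)
    have "(z - a / 2)^3 - z * (z - a)^2 = a / 8 * ((z - a) * (4 * z + 2 * a) + a^2)"
      by (simp add: field_simps power2_eq_square power3_eq_cube)
    also have "\<dots> \<ge> 0" using assms by (intro mult_nonneg_nonneg add_nonneg_nonneg) auto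
    finally have "z * (z - a)^2 \<le> (z - a / 2)^3" by simp
    also have "\<dots> \<le> v^3" using v assms by (intro power_mono) auto
    finally have "sqrt (z * (z - a)^2) \<le> sqrt (v^3)" by simp
    then have "(z - a) * sqrt z \<le> v * sqrt v"
      using \<open>0 < z - a\<close> v assms by (simp add: real_sqrt_mult power3_eq_cube mult.commute)
    then show ?thesis
      unfolding v_def[symmetric] using \<open>0 < z\<close> \<open>0 < z - a\<close> v assms
      by (intro divide_left_mono mult_pos_pos) auto
  qed
  then have "rd_tail (z - a) c \<le> rd_tail (z - a) a + 1 / ((z - a) * sqrt z) * (ln a - ln c)"
    using assms by (intro rd_tail_le_add_ln) auto
  also have "\<dots> < (2 * ln 2 - 2 + M * ln (z / a)) / (z * sqrt z) + 1 / ((z - a) * sqrt z) * (ln a - ln c)"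
    using rd_tail_bounds(2)[of a z] assms unfolding M_def by simp
  also have "\<dots> \<le> (2 * ln 2 - 2 + M * ln (z / a)) / (z * sqrt z) + M / (z * sqrt z) * (ln a - ln c)"
  proof -
    have "1 / ((z - a) * sqrt z) = z / (z - a) / (z * sqrt z)" using \<open>0 < z\<close> by simp
    also have "\<dots> \<le> M / (z * sqrt z)"
      using \<open>0 < z - a\<close> \<open>0 < z\<close> assms unfolding M_def
      by (intro divide_right_mono) (auto simp: field_simps)
    finally show ?thesis using assms by (intro add_left_mono mult_right_mono) auto
  qed
  also have "\<dots> = (2 * ln 2 - 2 + M * (ln (z / a) + (ln a - ln c))) / (z * sqrt z)"
    by (simp add: add_divide_distrib diff_divide_distrib algebra_simps)
  also have "\<dots> = (2 * ln 2 - 2 + M * ln (z / c)) / (z * sqrt z)"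
    using assms \<open>0 < z\<close> by (simp add: ln_div)
  finally show ?thesis unfolding M_def .
qed

definition sq_mean_sqrt :: "real \<Rightarrow> real \<Rightarrow> real \<Rightarrow> real" where
  "sq_mean_sqrt x y t = ((sqrt (t + x) + sqrt (t + y)) / 2)^2"

lemma isCont_sq_mean_sqrt: "isCont (sq_mean_sqrt x y) t"
  unfolding sq_mean_sqrt_def[abs_def] by (intro continuous_intros) auto

lemma sq_mean_sqrt_has_real_derivative:
  assumes "0 \<le> x" "0 \<le> y" "0 < t"
  shows "(sq_mean_sqrt x y has_real_derivative sq_mean_sqrt x y t / sqrt ((t + x) * (t + y))) (at t)"
proof -
  define p q where "p = sqrt (t + x)" and "q = sqrt (t + y)"
  have "0 < p" "0 < q" using assms by (auto simp: p_def q_def)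
  have "(sq_mean_sqrt x y has_real_derivative (p + q) / 2 * (1 / p + 1 / q) / 2) (at t)"
    unfolding sq_mean_sqrt_def[abs_def] p_def q_def using assms
    by (auto intro!: derivative_eq_intros simp: inverse_eq_divide)
  also have "(p + q) / 2 * (1 / p + 1 / q) / 2 = ((p + q) / 2)^2 / (p * q)"
    using \<open>0 < p\<close> \<open>0 < q\<close> by (simp add: field_simps power2_eq_square)
  finally show ?thesis
    using assms by (simp add: sq_mean_sqrt_def[abs_def] p_def q_def real_sqrt_mult)
qed

lemma sq_mean_sqrt_bounds:
  assumes "0 \<le> x" "0 \<le> y" "0 \<le> t"
  shows "t + sq_mean_sqrt x y 0 \<le> sq_mean_sqrt x y t" and "sq_mean_sqrt x y t \<le> t + (x + y) / 2"
proof -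
  define p q where "p = sqrt (t + x)" and "q = sqrt (t + y)"
  have pq: "0 \<le> p" "0 \<le> q" "p^2 = t + x" "q^2 = t + y" using assms by (auto simp: p_def q_def)
  have "2 * (sqrt x * sqrt y) \<le> x + y"
    using arith_geo_mean_sqrt[OF assms(1,2)] by (simp add: real_sqrt_mult)
  then have "(t + sqrt x * sqrt y)^2 \<le> t^2 + t * (x + y) + x * y"
    using assms mult_left_mono[of "2 * (sqrt x * sqrt y)" "x + y" t]
    by (simp add: power2_eq_square algebra_simps)
  also have "\<dots> = (t + x) * (t + y)" by (simp add: algebra_simps power2_eq_square)
  also have "\<dots> = (p * q)^2" by (simp only: power_mult_distrib pq(3,4))
  finally have "(t + sqrt x * sqrt y)^2 \<le> (p * q)^2" .
  then have "t + sqrt x * sqrt y \<le> p * q" by (rule power2_le_imp_le) (use pq in simp)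
  have square: "((u + v) / 2)^2 = (u^2 + v^2 + 2 * (u * v)) / 4" for u v :: real
    by (simp add: power2_eq_square field_simps)
  have r: "sq_mean_sqrt x y t = (2 * t + x + y + 2 * (p * q)) / 4"
    by (simp add: sq_mean_sqrt_def square p_def[symmetric] q_def[symmetric] pq(3,4))
  moreover have "sq_mean_sqrt x y 0 = (x + y + 2 * (sqrt x * sqrt y)) / 4"
    using assms by (simp add: sq_mean_sqrt_def square)
  ultimately show "t + sq_mean_sqrt x y 0 \<le> sq_mean_sqrt x y t"
    using \<open>t + sqrt x * sqrt y \<le> p * q\<close> by simp
  have "2 * (p * q) \<le> p^2 + q^2" using zero_le_power2[of "p - q"] by (simp add: power2_diff)
  then show "sq_mean_sqrt x y t \<le> t + (x + y) / 2"
    unfolding r using pq(3,4) by (simp add: field_simps)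
qed

lemma sq_mean_sqrt_0_pos:
  assumes "0 \<le> x" "0 \<le> y" "0 < x + y"
  shows "0 < sq_mean_sqrt x y 0"
proof -
  have "0 < sqrt x + sqrt y"
    using assms by (cases "x = 0") (simp_all add: add_pos_nonneg)
  then show ?thesis by (simp add: sq_mean_sqrt_def)
qed

lemma rd_tail_sq_mean_sqrt_has_real_derivative:
  assumes "0 \<le> x" "0 \<le> y" "0 < x + y" "0 < B" "0 < t"
  shows "((\<lambda>t. rd_tail B (sq_mean_sqrt x y t)) has_real_derivative
    - (1 / sqrt ((t + x) * (t + y)) * (sq_mean_sqrt x y t + B) powr (-3/2))) (at t)"
proof -
  define u where "u = sq_mean_sqrt x y t"
  have "0 < u"
    using sq_mean_sqrt_bounds(1)[of x y t] sq_mean_sqrt_0_pos[of x y] assms by (simp add: u_def)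
  have "0 < sqrt ((t + x) * (t + y))" using assms by simp
  have "((\<lambda>t. rd_tail B (sq_mean_sqrt x y t)) has_real_derivative
      - 1 / (u * (u + B) * sqrt (u + B)) * (u / sqrt ((t + x) * (t + y)))) (at t)"
    using rd_tail_has_real_derivative[OF assms(4) \<open>0 < u\<close>]
      sq_mean_sqrt_has_real_derivative[OF assms(1,2,5)]
    unfolding u_def by (rule DERIV_chain2)
  also have "- 1 / (u * (u + B) * sqrt (u + B)) * (u / sqrt ((t + x) * (t + y)))
      = - (1 / sqrt ((t + x) * (t + y)) * (u + B) powr (-3/2))"
    using \<open>0 < u\<close> \<open>0 < sqrt ((t + x) * (t + y))\<close> assms(4)
    by (simp add: powr_minus_divide powr_three_halves)
  finally show ?thesis unfolding u_def .
qed

lemma has_integral_rd_tail: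
  assumes "0 \<le> x" "0 \<le> y" "0 < x + y" "0 < B"
  shows "((\<lambda>t. 1 / sqrt ((t + x) * (t + y)) * (sq_mean_sqrt x y t + B) powr (-3/2))
    has_integral rd_tail B (sq_mean_sqrt x y 0)) {0<..}"
proof -
  define u where "u = sq_mean_sqrt x y"
  have "0 < u 0" using sq_mean_sqrt_0_pos[OF assms(1-3)] by (simp add: u_def)
  have u_ge: "t \<le> u t" "0 < u t" if "0 \<le> t" for t
    using sq_mean_sqrt_bounds(1)[OF assms(1,2) that] \<open>0 < u 0\<close> that by (simp_all add: u_def)
  have "((\<lambda>t. 1 / sqrt ((t + x) * (t + y)) * (u t + B) powr (-3/2))
      has_integral (0 - (- rd_tail B (u 0)))) {0<..}"
  proof (rule has_integral_Ioi_of_nonneg_deriv[where F = "\<lambda>t. - rd_tail B (u t)"])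
    fix t :: real assume "0 < t"
    show "((\<lambda>t. - rd_tail B (u t)) has_real_derivative
        1 / sqrt ((t + x) * (t + y)) * (u t + B) powr (-3/2)) (at t)"
      using DERIV_minus[OF rd_tail_sq_mean_sqrt_has_real_derivative[OF assms \<open>0 < t\<close>]]
      by (simp add: u_def)
    show "isCont (\<lambda>t. 1 / sqrt ((t + x) * (t + y)) * (u t + B) powr (-3/2)) t"
      using u_ge[of t] \<open>0 < t\<close> assms unfolding u_def
      by (intro continuous_intros isCont_sq_mean_sqrt) auto
    show "0 \<le> 1 / sqrt ((t + x) * (t + y)) * (u t + B) powr (-3/2)"
      using \<open>0 < t\<close> assms by simp
  next
    have "isCont (rd_tail B) (u 0)"
      using rd_tail_has_real_derivative[OF assms(4) \<open>0 < u 0\<close>] by (rule DERIV_isCont)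
    then have "isCont (\<lambda>t. - rd_tail B (u t)) 0"
      unfolding u_def by (intro continuous_intros isCont_o2[OF isCont_sq_mean_sqrt])
    then show "((\<lambda>t. - rd_tail B (u t)) \<longlongrightarrow> - rd_tail B (u 0)) (at_right 0)"
      by (simp add: isCont_def filterlim_at_split)
  next
    have "\<forall>\<^sub>F t in at_top. t \<le> u t"
      using eventually_ge_at_top[of 0] by eventually_elim (rule u_ge)
    then have "filterlim u at_top at_top" by (rule filterlim_at_top_mono[OF filterlim_ident])
    then have "((\<lambda>t. rd_tail B (u t)) \<longlongrightarrow> 0) at_top"
      by (rule filterlim_compose[OF tendsto_rd_tail_at_top[OF assms(4)]])
    then show "((\<lambda>t. - rd_tail B (u t)) \<longlongrightarrow> 0) at_top"
      using tendsto_minus by fastforce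
  qed
  then show ?thesis by (simp add: u_def)
qed

lemma shifted_sq_mean_sqrt_powr_bounds:
  assumes "0 \<le> x" "0 \<le> y" "0 < x + y" "(x + y) / 2 < z" "0 < t"
  defines "c \<equiv> sq_mean_sqrt x y 0"
  shows "(sq_mean_sqrt x y t + (z - c)) powr (-3/2) \<le> (t + z) powr (-3/2)"
    and "(t + z) powr (-3/2) \<le> (sq_mean_sqrt x y t + (z - (x + y) / 2)) powr (-3/2)"
proof -
  have "t + c \<le> sq_mean_sqrt x y t" "sq_mean_sqrt x y t \<le> t + (x + y) / 2"
    using sq_mean_sqrt_bounds[of x y t] assms by (auto simp: c_def)
  moreover have "0 < c" using sq_mean_sqrt_0_pos[OF assms(1-3)] by (simp add: c_def)
  moreover have "0 \<le> (x + y) / 2" using assms by simp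
  ultimately have "0 < sq_mean_sqrt x y t + (z - (x + y) / 2)" "0 < t + z"
    "sq_mean_sqrt x y t + (z - (x + y) / 2) \<le> t + z" "t + z \<le> sq_mean_sqrt x y t + (z - c)"
    using assms(4,5) by linarith+
  then show "(sq_mean_sqrt x y t + (z - c)) powr (-3/2) \<le> (t + z) powr (-3/2)"
    and "(t + z) powr (-3/2) \<le> (sq_mean_sqrt x y t + (z - (x + y) / 2)) powr (-3/2)"
    by (auto intro!: powr_mono2')
qed

lemma carlson_RD_between_rd_tails:
  assumes "0 \<le> x" "0 \<le> y" "0 < x + y" "(x + y) / 2 < z"
  defines "c \<equiv> sq_mean_sqrt x y 0"
  shows "rd_tail (z - c) c \<le> 2/3 * carlson_RD x y z"
    and "2/3 * carlson_RD x y z \<le> rd_tail (z - (x + y) / 2) c"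
proof -
  define a where "a = (x + y) / 2"
  define f where "f t = 1 / sqrt ((t + x) * (t + y)) * (t + z) powr (-3/2)" for t
  define p where "p B t = 1 / sqrt ((t + x) * (t + y)) * (sq_mean_sqrt x y t + B) powr (-3/2)"
    for B t
  have "c \<le> a" using sq_mean_sqrt_bounds(2)[of x y 0] assms by (simp add: c_def a_def)
  have upper: "(p (z - a) has_integral rd_tail (z - a) c) {0<..}"
    unfolding p_def c_def by (rule has_integral_rd_tail) (use assms in \<open>auto simp: a_def\<close>)
  have lower: "(p (z - c) has_integral rd_tail (z - c) c) {0<..}"
    unfolding p_def c_def
    by (rule has_integral_rd_tail) (use assms \<open>c \<le> a\<close> in \<open>auto simp: a_def c_def\<close>)
  have f_between: "p (z - c) t \<le> f t \<and> f t \<le> p (z - a) t" if "0 < t" for t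
    unfolding f_def p_def a_def c_def using shifted_sq_mean_sqrt_powr_bounds[OF assms(1-4) that] assms that
    by (intro conjI mult_left_mono) auto
  have "continuous_on {0<..} f"
    unfolding f_def using assms \<open>c \<le> a\<close>
    by (intro continuous_at_imp_continuous_on ballI continuous_intros) (auto simp: a_def)
  then have "f integrable_on {0<..}"
  proof (rule measurable_bounded_by_integrable_imp_integrable_real
      [OF continuous_imp_measurable_on_sets_lebesgue])
    show "p (z - a) integrable_on {0<..}" using upper by blast
    show "\<bar>f t\<bar> \<le> p (z - a) t" if "t \<in> {0<..}" for t
    proof -
      have "0 \<le> f t" unfolding f_def using that assms by simp
      with f_between[of t] that show ?thesis by simp
    qed
  qed auto
  moreover have "integral {0..} f = integral {0<..} f"
    by (rule integral_spike_set) (auto intro: negligible_subset[of "{0}"])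
  ultimately have RD: "(f has_integral 2/3 * carlson_RD x y z) {0<..}"
    by (simp add: carlson_RD_def f_def[abs_def] integrable_integral)
  show "rd_tail (z - c) c \<le> 2/3 * carlson_RD x y z"
    by (rule has_integral_le[OF lower RD]) (use f_between in auto)
  show "2/3 * carlson_RD x y z \<le> rd_tail (z - (x + y) / 2) c"
    by (rule has_integral_le[OF RD upper[unfolded a_def]]) (use f_between in \<open>auto simp: a_def\<close>)
qed

lemma carlson_RD_bounds:
  assumes "0 \<le> x" "0 \<le> y" "0 < x + y" "(x + y) / 2 < z"
  defines "a \<equiv> (x + y) / 2" and "c \<equiv> ((x + y) / 2 + sqrt (x * y)) / 2"
  shows "2 * ln 2 - 2 + z / (z - c) * ln (z / c) < 2/3 * z * sqrt z * carlson_RD x y z"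
    and "2/3 * z * sqrt z * carlson_RD x y z < 2 * ln 2 - 2 + (1 + 3 * a / (2 * (z - a))) * ln (z / c)"
proof -
  have c: "c = sq_mean_sqrt x y 0"
    using assms by (simp add: c_def sq_mean_sqrt_def power2_eq_square real_sqrt_mult field_simps)
  have "0 < c" "c \<le> a" "a < z"
    using sq_mean_sqrt_0_pos[OF assms(1-3)] sq_mean_sqrt_bounds(2)[of x y 0] assms
    by (auto simp: c a_def)
  have "0 \<le> sqrt (x * y)" using assms by simp
  then have "a \<le> 2 * c" unfolding a_def c_def by (simp add: field_simps)
  have "0 < z * sqrt z" using \<open>0 < c\<close> \<open>c \<le> a\<close> \<open>a < z\<close> by simp
  have "(2 * ln 2 - 2 + z / (z - c) * ln (z / c)) / (z * sqrt z) < rd_tail (z - c) c"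
    using \<open>0 < c\<close> \<open>c \<le> a\<close> \<open>a < z\<close> by (intro rd_tail_bounds(1)) auto
  also have "\<dots> \<le> 2/3 * carlson_RD x y z"
    using carlson_RD_between_rd_tails(1)[OF assms(1-4)] by (simp add: c)
  finally show "2 * ln 2 - 2 + z / (z - c) * ln (z / c) < 2/3 * z * sqrt z * carlson_RD x y z"
    using \<open>0 < z * sqrt z\<close> by (simp add: pos_divide_less_eq algebra_simps)
  have "2/3 * carlson_RD x y z \<le> rd_tail (z - a) c"
    using carlson_RD_between_rd_tails(2)[OF assms(1-4)] by (simp add: c a_def)
  also have "\<dots> < (2 * ln 2 - 2 + (1 + 3 * a / (2 * (z - a))) * ln (z / c)) / (z * sqrt z)"
    using \<open>0 < c\<close> \<open>c \<le> a\<close> \<open>a \<le> 2 * c\<close> \<open>a < z\<close> by (rule rd_tail_upper_bound_shifted)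
  finally show "2/3 * z * sqrt z * carlson_RD x y z
      < 2 * ln 2 - 2 + (1 + 3 * a / (2 * (z - a))) * ln (z / c)"
    using \<open>0 < z * sqrt z\<close> by (simp add: less_divide_eq algebra_simps)
qed

lemma carlson_RD_remainder_bounds:
  assumes "0 \<le> x" "0 \<le> y" "0 < x + y" "(x + y) / 2 < z"
  defines "a \<equiv> (x + y) / 2" and "g \<equiv> sqrt (x * y)"
  shows "g / (z - g) * ln (2 * z / (a + g))
      < 2/3 * z powr (3/2) * carlson_RD x y z - ln (8 * z / (a + g)) + 2"
    and "2/3 * z powr (3/2) * carlson_RD x y z - ln (8 * z / (a + g)) + 2
      < 3 * a / (2 * (z - a)) * ln (2 * z / (a + g))"
proof -
  define L V where "L = ln (2 * z / (a + g))"
    and "V = 2/3 * z powr (3/2) * carlson_RD x y z - ln (8 * z / (a + g)) + 2"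
  define c where "c = (a + g) / 2"
  have "0 \<le> g" "g \<le> a" using arith_geo_mean_sqrt[OF assms(1,2)] assms by (simp_all add: a_def g_def)
  with assms(3,4) have "0 < c" "g \<le> c" "c < z"
    unfolding a_def c_def by (auto simp: field_simps)
  have "L = ln (z / c)" by (simp add: L_def c_def mult.commute)
  then have "0 < L" using \<open>0 < c\<close> \<open>c < z\<close> by simp
  have "ln (8::real) = 3 * ln 2" using ln_realpow[of 2 3] by simp
  with \<open>0 < c\<close> \<open>c < z\<close> \<open>L = ln (z / c)\<close> have "ln (8 * z / (a + g)) = 2 * ln 2 + L"
    by (simp add: c_def ln_mult ln_div)
  then have V: "V = 2/3 * z * sqrt z * carlson_RD x y z - (2 * ln 2 - 2) - L"
    using \<open>0 < c\<close> \<open>c < z\<close> by (simp add: V_def powr_three_halves)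
  have "g / (z - g) * L \<le> c / (z - c) * L"
    using \<open>0 < L\<close> \<open>0 \<le> g\<close> \<open>g \<le> c\<close> \<open>c < z\<close> by (intro mult_right_mono frac_le) auto
  also have "c / (z - c) * L < V"
    using carlson_RD_bounds(1)[OF assms(1-4)] \<open>c < z\<close> \<open>L = ln (z / c)\<close>
    unfolding V c_def a_def g_def by (simp add: field_simps)
  finally show "g / (z - g) * ln (2 * z / (a + g))
      < 2/3 * z powr (3/2) * carlson_RD x y z - ln (8 * z / (a + g)) + 2"
    unfolding L_def V_def .
  have "V < 3 * a / (2 * (z - a)) * L"
    using carlson_RD_bounds(2)[OF assms(1-4)] \<open>L = ln (z / c)\<close>
    unfolding V c_def a_def g_def by (simp add: algebra_simps)
  then show "2/3 * z powr (3/2) * carlson_RD x y z - ln (8 * z / (a + g)) + 2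
      < 3 * a / (2 * (z - a)) * ln (2 * z / (a + g))"
    unfolding L_def V_def .
qed

theorem mainTheorem6:
  fixes x y z :: real
  assumes "x \<ge> 0" and "y \<ge> 0" and "x \<noteq> 0 \<or> y \<noteq> 0" and "z > 0"
    and "(x + y) / 2 < z"
  shows "let a = (x + y) / 2; g = sqrt (x * y) in
    \<exists>\<theta>::real. g / (1 - g / z) < \<theta> \<and> \<theta> < 3 * a / (2 * (1 - a / z)) \<and>
      carlson_RD x y z =
        3 / (2 * z powr (3/2)) * (ln (8 * z / (a + g)) - 2 + \<theta> / z * ln (2 * z / (a + g)))"
proof -
  define a g where "a = (x + y) / 2" and "g = sqrt (x * y)"
  define L V where "L = ln (2 * z / (a + g))"
    and "V = 2/3 * z powr (3/2) * carlson_RD x y z - ln (8 * z / (a + g)) + 2"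
  have "0 < x + y" using assms(1-3) by auto
  have "0 \<le> g" "g \<le> a" using arith_geo_mean_sqrt[OF assms(1,2)] assms by (simp_all add: a_def g_def)
  then have "0 < L" using \<open>0 < x + y\<close> assms(5) by (simp add: L_def a_def field_simps)
  have "g / (z - g) < V / L" "V / L < 3 * a / (2 * (z - a))"
    using carlson_RD_remainder_bounds[OF assms(1,2) \<open>0 < x + y\<close> assms(5)] \<open>0 < L\<close>
    by (simp_all add: L_def V_def a_def g_def less_divide_eq divide_less_eq)
  define \<theta> where "\<theta> = z * (V / L)"
  have \<theta>_bounds: "g / (1 - g / z) < \<theta>" "\<theta> < 3 * a / (2 * (1 - a / z))"
    using mult_strict_left_mono[OF \<open>g / (z - g) < V / L\<close> assms(4)]
      mult_strict_left_mono[OF \<open>V / L < 3 * a / (2 * (z - a))\<close> assms(4)]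
      \<open>g \<le> a\<close> assms(4,5) by (simp_all add: \<theta>_def a_def field_simps)
  have "\<theta> / z * L = V" using \<open>0 < L\<close> assms(4) by (simp add: \<theta>_def)
  then have "carlson_RD x y z =
      3 / (2 * z powr (3/2)) * (ln (8 * z / (a + g)) - 2 + \<theta> / z * ln (2 * z / (a + g)))"
    unfolding L_def[symmetric] using assms(4) by (simp add: V_def)
  with \<theta>_bounds show ?thesis unfolding Let_def a_def g_def by blast
qed

end
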